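(* Let $(G_i)_{i\in I}$ be a family of convergence groups, let $G=\prod_{i\in I}G_i$ with the product convergence structure, and let $e_i: G_i\to G$ be the natural injections. If $M\subseteq \Gamma_s G$ is compact, then there is a finite set $I_0\subseteq I$ such that $\varphi\circ e_i = 0$ for all $\varphi\in M$ and all $i\in I\setminus I_0$.
   Context: All groups are abelian. A convergence group is an abelian group with a convergence structure (an assignment to each point $x$ of a collection of filters converging to $x$). This assignment must satisfy three conditions: point ultrafilters converge to their point; finite intersections of filters converging to $x$ converge to $x$; and finer filters converge. The group operation must be compatible: $\mathcal F\to x$, $\mathcal G\to y$ imply $\mathcal F-\mathcal G\to x-y$. In the product convergence structure, a filter converges iff all its coordinate projections converge. $\mathbb T=\mathbb R/\mathbb Z$. $\Gamma G$ is the group of continuous homomorphisms $G\to\mathbb T$, and $\Gamma_s G$ is $\Gamma G$ with the topology of pointwise convergence on $G$. *)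

theory Defs
  imports "HOL-Analysis.Analysis" "HOL-Algebra.Product_Groups"
begin

text \<open>Filters live on the ambient type;
  a filter "on the carrier" is one that eventually lies in the carrier.
  Isabelle's filter order is reversed w.r.t. inclusion of filters as set systems:
  the intersection of two set-filters is sup, and "finer" means smaller.\<close>

definition convergence_group ::
  "('a, 'b) monoid_scheme \<Rightarrow> ('a filter \<Rightarrow> 'a \<Rightarrow> bool) \<Rightarrow> bool" where
  "convergence_group G conv \<longleftrightarrow>
     comm_group G \<and>
     (\<forall>F x. conv F x \<longrightarrow> x \<in> carrier G \<and> eventually (\<lambda>y. y \<in> carrier G) F) \<and>
     (\<forall>x \<in> carrier G. conv (principal {x}) x) \<and>
     (\<forall>F F' x. conv F x \<and> conv F' x \<longrightarrow> conv (sup F F') x) \<and>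
     (\<forall>F F' x. conv F x \<and> F' \<le> F \<longrightarrow> conv F' x) \<and>
     (\<forall>F F' x y. conv F x \<and> conv F' y \<longrightarrow>
        conv (filtermap (\<lambda>(a, b). a \<otimes>\<^bsub>G\<^esub> inv\<^bsub>G\<^esub> b) (F \<times>\<^sub>F F'))
             (x \<otimes>\<^bsub>G\<^esub> inv\<^bsub>G\<^esub> y))"

definition product_conv ::
  "'i set \<Rightarrow> ('i \<Rightarrow> ('a, 'b) monoid_scheme) \<Rightarrow> ('i \<Rightarrow> 'a filter \<Rightarrow> 'a \<Rightarrow> bool)
     \<Rightarrow> ('i \<Rightarrow> 'a) filter \<Rightarrow> ('i \<Rightarrow> 'a) \<Rightarrow> bool" where
  "product_conv I G conv F x \<longleftrightarrow>
     x \<in> (\<Pi>\<^sub>E i\<in>I. carrier (G i)) \<and>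
     eventually (\<lambda>y. y \<in> (\<Pi>\<^sub>E i\<in>I. carrier (G i))) F \<and>
     (\<forall>i\<in>I. conv i (filtermap (\<lambda>y. y i) F) (x i))"

definition prod_inj ::
  "'i set \<Rightarrow> ('i \<Rightarrow> ('a, 'b) monoid_scheme) \<Rightarrow> 'i \<Rightarrow> 'a \<Rightarrow> ('i \<Rightarrow> 'a)" where
  "prod_inj I G i g = (\<lambda>j\<in>I. if j = i then g else \<one>\<^bsub>G j\<^esub>)"

text \<open>The circle group T = R/Z is represented (isomorphically, as a topological
  group, via t \<mapsto> exp(2 pi i t)) by the unit circle in the complex numbers under
  multiplication; the zero of T corresponds to 1.
  Gamma G: continuous homomorphisms G \<rightarrow> T, taken extensional on the carrier.\<close>

definition characters ::
  "('a, 'b) monoid_scheme \<Rightarrow> ('a filter \<Rightarrow> 'a \<Rightarrow> bool) \<Rightarrow> ('a \<Rightarrow> complex) set" where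
  "characters G conv = {ch.
     ch \<in> extensional (carrier G) \<and>
     (\<forall>x\<in>carrier G. cmod (ch x) = 1) \<and>
     (\<forall>x\<in>carrier G. \<forall>y\<in>carrier G. ch (x \<otimes>\<^bsub>G\<^esub> y) = ch x * ch y) \<and>
     (\<forall>F x. conv F x \<longrightarrow> filterlim ch (nhds (ch x)) F)}"

text \<open>Topology of pointwise convergence on G (Gamma_s G carries the subspace topology).\<close>

definition pointwise_top :: "'a set \<Rightarrow> ('a \<Rightarrow> complex) topology" where
  "pointwise_top X = product_topology (\<lambda>_. euclidean) X"

end

(*
  (1) The circle has no small subgroups: a set of unit complex numbers that is
      closed under squaring and lies in the disc |z - 1| < 1 is {1}.  Hence a
      character of the product is trivial on all elements that are the identity
      on some finite set of coordinates (it is continuous at the identity for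
      the filter of such elements), and a character that is non-trivial on a
      factor takes a value at distance >= 1 from 1 on that factor.
  (2) If the theorem failed, one could choose characters theta n in M and new
      coordinates idx n avoiding the finite supports of the earlier theta k,
      with theta n far from 1 on the idx n-th factor.  A greedy choice of
      coordinates beyond idx m yields points p m of the product with
      |theta k (p m) - 1| >= 1/2 for all k >= m, while every character in M is
      1 at p m for m large.
  (3) Compactness of M in the pointwise topology bounds the required m
      uniformly on M, which contradicts (2) for theta N with N large.
*)
theory Submission
  imports Defs
begin

subsection \<open>The circle has no small subgroups\<close>

lemma unit_circle_square_repels:
  fixes z :: complex
  assumes unit: "cmod z = 1" and near: "cmod (z - 1) < 1"
  shows "3/2 * cmod (z - 1) \<le> cmod (z * z - 1)"
proof -
  have "(Re z - 1)^2 + (Im z)^2 < 1"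
    using near by (simp add: cmod_def)
  moreover have "(Re z)^2 + (Im z)^2 = 1"
    using unit by (simp add: cmod_def)
  ultimately have "3/2 \<le> Re (z + 1)"
    by (simp add: power2_eq_square algebra_simps)
  also have "\<dots> \<le> cmod (z + 1)"
    by (rule complex_Re_le_cmod)
  finally have "3/2 * cmod (z - 1) \<le> cmod (z + 1) * cmod (z - 1)"
    by (rule mult_right_mono) simp
  also have "\<dots> = cmod (z * z - 1)"
    by (simp add: norm_mult[symmetric] algebra_simps)
  finally show ?thesis .
qed

lemma unit_circle_no_small_subsemigroup:
  fixes S :: "complex set"
  assumes square: "\<And>w. w \<in> S \<Longrightarrow> w * w \<in> S"
    and unit: "\<And>w. w \<in> S \<Longrightarrow> cmod w = 1"
    and near: "\<And>w. w \<in> S \<Longrightarrow> cmod (w - 1) < 1"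
    and z: "z \<in> S"
  shows "z = 1"
proof (rule ccontr)
  assume "z \<noteq> 1"
  then have d: "0 < cmod (z - 1)" by simp
  have iter: "z ^ (2 ^ n) \<in> S \<and> (3/2) ^ n * cmod (z - 1) \<le> cmod (z ^ (2 ^ n) - 1)" for n
  proof (induction n)
    case 0
    then show ?case using z by simp
  next
    case (Suc n)
    let ?w = "z ^ (2 ^ n)"
    have sq: "?w * ?w = z ^ (2 ^ Suc n)"
      by (metis power_add mult_2 power_Suc)
    have "(3/2) ^ Suc n * cmod (z - 1) \<le> 3/2 * cmod (?w - 1)"
      using Suc by (simp add: ac_simps)
    also have "\<dots> \<le> cmod (?w * ?w - 1)"
      using Suc unit near by (intro unit_circle_square_repels) auto
    finally show ?case
      using Suc square sq by metis
  qed
  obtain n where "1 / cmod (z - 1) < (3/2) ^ n"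
    using real_arch_pow[of "3/2"] by auto
  then have "1 < (3/2) ^ n * cmod (z - 1)"
    using d by (simp add: field_simps)
  with iter[of n] near show False
    by fastforce
qed

lemma unit_times_far_is_far:
  fixes c w :: complex
  assumes "cmod c = 1" and "1 \<le> cmod (w - 1)" and "cmod (c - 1) < 1/2"
  shows "1/2 \<le> cmod (c * w - 1)"
proof -
  have "c * w - c = c * (w - 1)"
    by (simp add: algebra_simps)
  then have "cmod (c * w - c) = cmod (w - 1)"
    using assms(1) by (simp add: norm_mult)
  moreover have "cmod (c * w - c) \<le> cmod (c * w - 1) + cmod (c - 1)"
    using norm_triangle_ineq4[of "c * w - 1" "c - 1"] by simp
  ultimately show ?thesis
    using assms(2,3) by linarith
qed

lemma character_mult:
  assumes "\<phi> \<in> characters H cv" and "x \<in> carrier H" and "y \<in> carrier H"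
  shows "\<phi> (x \<otimes>\<^bsub>H\<^esub> y) = \<phi> x * \<phi> y"
  using assms by (simp add: characters_def)

lemma character_unit:
  assumes "\<phi> \<in> characters H cv" and "x \<in> carrier H"
  shows "cmod (\<phi> x) = 1"
  using assms by (simp add: characters_def)

lemma character_one:
  assumes "\<phi> \<in> characters H cv" and "monoid H"
  shows "\<phi> \<one>\<^bsub>H\<^esub> = 1"
proof -
  have one: "\<one>\<^bsub>H\<^esub> \<in> carrier H"
    using assms(2) by (rule monoid.one_closed)
  then have "\<phi> \<one>\<^bsub>H\<^esub> * \<phi> \<one>\<^bsub>H\<^esub> = \<phi> \<one>\<^bsub>H\<^esub> * 1"
    using assms character_mult[OF assms(1) one one] by (simp add: monoid.l_one)
  moreover have "\<phi> \<one>\<^bsub>H\<^esub> \<noteq> 0"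
    using character_unit[OF assms(1) one] by auto
  ultimately show ?thesis
    by (metis mult_left_cancel)
qed

lemma character_trivial_if_near_one:
  assumes \<phi>: "\<phi> \<in> characters H cv"
    and K: "K \<subseteq> carrier H" "\<And>y z. y \<in> K \<Longrightarrow> z \<in> K \<Longrightarrow> y \<otimes>\<^bsub>H\<^esub> z \<in> K"
    and near: "\<And>y. y \<in> K \<Longrightarrow> cmod (\<phi> y - 1) < 1"
    and y: "y \<in> K"
  shows "\<phi> y = 1"
proof (rule unit_circle_no_small_subsemigroup[where S = "\<phi> ` K"])
  fix w assume "w \<in> \<phi> ` K"
  then obtain v where v: "v \<in> K" "w = \<phi> v" by auto
  then show "w * w \<in> \<phi> ` K"
    using K character_mult[OF \<phi>] by (metis image_eqI subsetD)
  show "cmod w = 1"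
    using v K character_unit[OF \<phi>] by auto
  show "cmod (w - 1) < 1"
    using v near by simp
qed (use y in simp)

definition prod_part ::
  "'i set \<Rightarrow> ('i \<Rightarrow> ('a, 'b) monoid_scheme) \<Rightarrow> ('i \<Rightarrow> 'a) \<Rightarrow> 'i set \<Rightarrow> ('i \<Rightarrow> 'a)" where
  "prod_part I G x A = (\<lambda>j\<in>I. if j \<in> A then x j else \<one>\<^bsub>G j\<^esub>)"

definition prod_trivial_on ::
  "'i set \<Rightarrow> ('i \<Rightarrow> ('a, 'b) monoid_scheme) \<Rightarrow> 'i set \<Rightarrow> ('i \<Rightarrow> 'a) set" where
  "prod_trivial_on I G J =
     {x \<in> carrier (product_group I G). \<forall>j\<in>J \<inter> I. x j = \<one>\<^bsub>G j\<^esub>}"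

lemma prod_part_carrier:
  assumes "\<forall>i\<in>I. monoid (G i)" and "x \<in> carrier (product_group I G)"
  shows "prod_part I G x A \<in> carrier (product_group I G)"
  using assms by (auto simp: prod_part_def monoid.one_closed)

lemma prod_part_union:
  assumes "\<forall>i\<in>I. monoid (G i)" and "x \<in> carrier (product_group I G)" and "A \<inter> B = {}"
  shows "prod_part I G x (A \<union> B) = prod_part I G x A \<otimes>\<^bsub>product_group I G\<^esub> prod_part I G x B"
proof -
  have "(if j \<in> A \<union> B then x j else \<one>\<^bsub>G j\<^esub>) =
          (if j \<in> A then x j else \<one>\<^bsub>G j\<^esub>) \<otimes>\<^bsub>G j\<^esub> (if j \<in> B then x j else \<one>\<^bsub>G j\<^esub>)"
    if "j \<in> I" for j
    using assms that by (auto simp: PiE_iff monoid.l_one monoid.r_one)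
  then show ?thesis
    by (simp add: prod_part_def fun_eq_iff)
qed

lemma prod_part_trivial_on:
  assumes "\<forall>i\<in>I. monoid (G i)" and "x \<in> carrier (product_group I G)" and "A \<inter> J = {}"
  shows "prod_part I G x A \<in> prod_trivial_on I G J"
  using assms prod_part_carrier[OF assms(1,2)] by (auto simp: prod_trivial_on_def prod_part_def)

lemma prod_part_singleton:
  "prod_part I G x {i} = prod_inj I G i (x i)"
  by (auto simp: prod_part_def prod_inj_def)

lemma prod_trivial_on_mult:
  assumes "\<forall>i\<in>I. monoid (G i)"
    and "x \<in> prod_trivial_on I G J" and "y \<in> prod_trivial_on I G J"
  shows "x \<otimes>\<^bsub>product_group I G\<^esub> y \<in> prod_trivial_on I G J"
  using assms by (auto simp: prod_trivial_on_def monoid.l_one monoid.one_closed monoid.m_closed PiE_iff)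

lemma prod_inj_carrier:
  assumes "\<forall>i\<in>I. monoid (G i)" and "i \<in> I" and "g \<in> carrier (G i)"
  shows "prod_inj I G i g \<in> carrier (product_group I G)"
  using assms by (auto simp: prod_inj_def monoid.one_closed)

lemma prod_inj_mult:
  assumes "\<forall>i\<in>I. monoid (G i)"
  shows "prod_inj I G i (g \<otimes>\<^bsub>G i\<^esub> h) =
           prod_inj I G i g \<otimes>\<^bsub>product_group I G\<^esub> prod_inj I G i h"
  using assms by (auto simp: prod_inj_def monoid.l_one monoid.one_closed)

lemma character_prod_part_union:
  assumes mon: "\<forall>i\<in>I. monoid (G i)" and \<phi>: "\<phi> \<in> characters (product_group I G) cv"
    and x: "x \<in> carrier (product_group I G)" and disj: "A \<inter> A' = {}"
  shows "\<phi> (prod_part I G x (A \<union> A')) = \<phi> (prod_part I G x A) * \<phi> (prod_part I G x A')"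
  unfolding prod_part_union[OF mon x disj]
  by (intro character_mult[OF \<phi>] prod_part_carrier[OF mon x])

lemma prod_glue:
  assumes mon: "\<forall>i\<in>I. monoid (G i)" and inj: "inj idx"
    and idx: "\<And>n. idx n \<in> I" and g: "\<And>n. g n \<in> carrier (G (idx n))"
  obtains x where "x \<in> carrier (product_group I G)" and "\<And>n. x (idx n) = g n"
proof -
  define x where "x = (\<lambda>j\<in>I. if j \<in> range idx then g (inv_into UNIV idx j) else \<one>\<^bsub>G j\<^esub>)"
  have x_idx: "x (idx n) = g n" for n
    using idx inj by (simp add: x_def)
  have "x j \<in> carrier (G j)" if "j \<in> I" for j
  proof (cases "j \<in> range idx")
    case True
    then obtain n where "j = idx n" by blast
    then show ?thesis using g x_idx by simp
  next
    case False
    then show ?thesis using that mon by (simp add: x_def monoid.one_closed)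
  qed
  then have "x \<in> carrier (product_group I G)"
    by (simp add: x_def)
  then show thesis
    using x_idx by (rule that)
qed

subsection \<open>Characters of a product are finitely supported\<close>

lemma convergence_group_group: "convergence_group H cv \<Longrightarrow> group H"
  by (simp add: convergence_group_def comm_group_def)

definition cofinite_trivial_filter ::
  "'i set \<Rightarrow> ('i \<Rightarrow> ('a, 'b) monoid_scheme) \<Rightarrow> ('i \<Rightarrow> 'a) filter" where
  "cofinite_trivial_filter I G = (INF J\<in>{J. finite J}. principal (prod_trivial_on I G J))"

lemma eventually_cofinite_trivial_filter:
  fixes I :: "'i set" and G :: "'i \<Rightarrow> ('a, 'b) monoid_scheme"
  shows "eventually P (cofinite_trivial_filter I G) \<longleftrightarrow>
     (\<exists>J. finite J \<and> (\<forall>x\<in>prod_trivial_on I G J. P x))"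
  unfolding cofinite_trivial_filter_def
proof (subst eventually_INF_base)
  fix J J' :: "'i set" assume "J \<in> {J. finite J}" "J' \<in> {J. finite J}"
  then show "\<exists>K\<in>{J. finite J}. principal (prod_trivial_on I G K) \<le>
               inf (principal (prod_trivial_on I G J)) (principal (prod_trivial_on I G J'))"
    by (intro bexI[of _ "J \<union> J'"]) (auto simp: prod_trivial_on_def)
qed (auto simp: eventually_principal)

lemma cofinite_trivial_filter_converges:
  assumes cg: "\<forall>i\<in>I. convergence_group (G i) (conv i)"
  shows "product_conv I G conv (cofinite_trivial_filter I G) (\<lambda>i\<in>I. \<one>\<^bsub>G i\<^esub>)"
  unfolding product_conv_def
proof (intro conjI ballI)
  have mon: "\<forall>i\<in>I. monoid (G i)"
    using cg convergence_group_group group.is_monoid by blast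
  then show "(\<lambda>i\<in>I. \<one>\<^bsub>G i\<^esub>) \<in> (\<Pi>\<^sub>E i\<in>I. carrier (G i))"
    by (auto simp: monoid.one_closed)
  show "eventually (\<lambda>y. y \<in> (\<Pi>\<^sub>E i\<in>I. carrier (G i))) (cofinite_trivial_filter I G)"
    unfolding eventually_cofinite_trivial_filter
    by (intro exI[of _ "{}"]) (auto simp: prod_trivial_on_def)
  fix i assume i: "i \<in> I"
  have "filtermap (\<lambda>y. y i) (cofinite_trivial_filter I G) \<le> principal {\<one>\<^bsub>G i\<^esub>}"
    unfolding le_principal eventually_filtermap eventually_cofinite_trivial_filter
    using i by (intro exI[of _ "{i}"]) (auto simp: prod_trivial_on_def)
  moreover have "conv i (principal {\<one>\<^bsub>G i\<^esub>}) \<one>\<^bsub>G i\<^esub>"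
    using cg i mon by (auto simp: convergence_group_def monoid.one_closed)
  ultimately show "conv i (filtermap (\<lambda>y. y i) (cofinite_trivial_filter I G))
                     ((\<lambda>i\<in>I. \<one>\<^bsub>G i\<^esub>) i)"
    using cg i by (auto simp: convergence_group_def)
qed

lemma character_finite_support:
  assumes cg: "\<forall>i\<in>I. convergence_group (G i) (conv i)"
    and \<phi>: "\<phi> \<in> characters (product_group I G) (product_conv I G conv)"
  shows "\<exists>J. finite J \<and> (\<forall>x\<in>prod_trivial_on I G J. \<phi> x = 1)"
proof -
  have mon: "\<forall>i\<in>I. monoid (G i)"
    using cg convergence_group_group group.is_monoid by blast
  have "group (product_group I G)"
    by (rule product_group) (use cg convergence_group_group in blast)
  then have "\<phi> (\<lambda>i\<in>I. \<one>\<^bsub>G i\<^esub>) = 1"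
    using character_one[OF \<phi>] group.is_monoid by fastforce
  moreover have "filterlim \<phi> (nhds (\<phi> (\<lambda>i\<in>I. \<one>\<^bsub>G i\<^esub>))) (cofinite_trivial_filter I G)"
    using \<phi> cofinite_trivial_filter_converges[OF cg] unfolding characters_def by blast
  ultimately have "filterlim \<phi> (nhds 1) (cofinite_trivial_filter I G)"
    by simp
  then have "eventually (\<lambda>x. dist (\<phi> x) 1 < 1) (cofinite_trivial_filter I G)"
    by (rule tendstoD) simp
  then obtain J where J: "finite J" "\<forall>x\<in>prod_trivial_on I G J. cmod (\<phi> x - 1) < 1"
    unfolding eventually_cofinite_trivial_filter dist_norm by blast
  have "prod_trivial_on I G J \<subseteq> carrier (product_group I G)"
    by (auto simp: prod_trivial_on_def)
  then have "\<phi> x = 1" if "x \<in> prod_trivial_on I G J" for x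
    using J(2) that prod_trivial_on_mult[OF mon]
    by (intro character_trivial_if_near_one[OF \<phi>, of "prod_trivial_on I G J"]) auto
  with J(1) show ?thesis by blast
qed

lemma character_far_on_factor:
  assumes mon: "\<forall>i\<in>I. monoid (G i)"
    and \<phi>: "\<phi> \<in> characters (product_group I G) cv"
    and i: "i \<in> I" and g: "g \<in> carrier (G i)"
    and nontrivial: "\<phi> (prod_inj I G i g) \<noteq> 1"
  shows "\<exists>h\<in>carrier (G i). 1 \<le> cmod (\<phi> (prod_inj I G i h) - 1)"
proof (rule ccontr)
  let ?K = "prod_inj I G i ` carrier (G i)"
  assume "\<not> ?thesis"
  then have near: "cmod (\<phi> y - 1) < 1" if "y \<in> ?K" for y
    using that by force
  have "?K \<subseteq> carrier (product_group I G)"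
    using prod_inj_carrier[OF mon i] by blast
  moreover have "y \<otimes>\<^bsub>product_group I G\<^esub> z \<in> ?K" if yz: "y \<in> ?K" "z \<in> ?K" for y z
  proof -
    obtain g h where "g \<in> carrier (G i)" "h \<in> carrier (G i)"
      and "y = prod_inj I G i g" "z = prod_inj I G i h"
      using yz by blast
    moreover have "g \<otimes>\<^bsub>G i\<^esub> h \<in> carrier (G i)"
      using calculation(1,2) mon i by (simp add: monoid.m_closed)
    ultimately show ?thesis
      using prod_inj_mult[OF mon, of i g h] by (metis image_eqI)
  qed
  ultimately have "\<phi> (prod_inj I G i g) = 1"
    using near g by (intro character_trivial_if_near_one[OF \<phi>]) auto
  with nontrivial show False ..
qed

subsection \<open>The gliding hump\<close>

primrec greedy :: "(nat \<Rightarrow> nat set \<Rightarrow> bool) \<Rightarrow> nat \<Rightarrow> nat set" where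
  "greedy admit 0 = {}"
| "greedy admit (Suc n) =
     (if admit n (greedy admit n) then insert n (greedy admit n) else greedy admit n)"

lemma greedy_eq: "greedy admit n = {k. k < n \<and> admit k (greedy admit k)}"
proof (induction n)
  case (Suc n)
  have "{k. k < Suc n \<and> admit k (greedy admit k)} =
          {k. k < n \<and> admit k (greedy admit k)} \<union> {k. k = n \<and> admit n (greedy admit n)}"
    by (auto simp: less_Suc_eq)
  then show ?case
    by (simp add: Suc.IH[symmetric])
qed simp

lemma multiplicative_tail_trivial:
  fixes v :: "nat set \<Rightarrow> complex"
  assumes mult: "\<And>A A'. A \<inter> A' = {} \<Longrightarrow> v (A \<union> A') = v A * v A'"
    and tail: "\<And>A. A \<subseteq> {k<..} \<Longrightarrow> v A = 1"
  shows "v B = v (B \<inter> {..k})"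
proof -
  have "v B = v ((B \<inter> {..k}) \<union> (B \<inter> {k<..}))"
    by (rule arg_cong[where f = v]) auto
  also have "\<dots> = v (B \<inter> {..k}) * v (B \<inter> {k<..})"
    by (rule mult) auto
  also have "\<dots> = v (B \<inter> {..k})"
    using tail[of "B \<inter> {k<..}"] by simp
  finally show ?thesis .
qed

lemma greedy_hump:
  fixes val :: "nat \<Rightarrow> nat set \<Rightarrow> complex"
  assumes mult: "\<And>k A A'. A \<inter> A' = {} \<Longrightarrow> val k (A \<union> A') = val k A * val k A'"
    and unit: "\<And>k A. cmod (val k A) = 1"
    and hump: "\<And>k. 1 \<le> cmod (val k {k} - 1)"
    and tail: "\<And>k A. A \<subseteq> {k<..} \<Longrightarrow> val k A = 1"
  shows "\<exists>B \<subseteq> {m..}. \<forall>k\<ge>m. 1/2 \<le> cmod (val k B - 1)"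
proof -
  define admit where "admit k A \<longleftrightarrow> m \<le> k \<and> cmod (val k A - 1) < 1/2" for k A
  define B where "B = {k. admit k (greedy admit k)}"
  have B_below: "B \<inter> {..<k} = greedy admit k" for k
    unfolding greedy_eq[of admit k] B_def by auto
  have "1/2 \<le> cmod (val k B - 1)" if k: "m \<le> k" for k
  proof -
    have val_B: "val k B = val k (B \<inter> {..k})"
      by (rule multiplicative_tail_trivial[where v = "val k"]) (simp_all add: mult tail)
    show ?thesis
    proof (cases "k \<in> B")
      case True
      then have split: "B \<inter> {..k} = (B \<inter> {..<k}) \<union> {k}"
        by auto
      have disj: "greedy admit k \<inter> {k} = {}"
        unfolding B_below[symmetric] by auto
      have "val k B = val k (greedy admit k) * val k {k}"
        unfolding val_B split B_below by (rule mult[OF disj])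
      moreover have "admit k (greedy admit k)"
        using True unfolding B_def by simp
      then have "cmod (val k (greedy admit k) - 1) < 1/2"
        unfolding admit_def by simp
      ultimately show ?thesis
        using unit_times_far_is_far[OF unit hump] by metis
    next
      case False
      then have "B \<inter> {..k} = B \<inter> {..<k}"
        by (auto simp: le_less)
      then have "val k B = val k (greedy admit k)"
        using val_B B_below[of k] by simp
      moreover have "\<not> admit k (greedy admit k)"
        using False unfolding B_def by simp
      ultimately show ?thesis
        using k unfolding admit_def by simp
    qed
  qed
  moreover have "B \<subseteq> {m..}"
    by (auto simp: B_def admit_def)
  ultimately show ?thesis
    by blast
qed

lemma gliding_hump:
  fixes \<theta> :: "nat \<Rightarrow> ('i \<Rightarrow> 'a) \<Rightarrow> complex" and idx :: "nat \<Rightarrow> 'i"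
  assumes mon: "\<forall>i\<in>I. monoid (G i)"
    and \<theta>: "\<And>k. \<theta> k \<in> characters (product_group I G) cv"
    and x: "x \<in> carrier (product_group I G)"
    and inj: "inj idx"
    and hump: "\<And>k. 1 \<le> cmod (\<theta> k (prod_part I G x {idx k}) - 1)"
    and tail: "\<And>k A. A \<subseteq> {k<..} \<Longrightarrow> \<theta> k (prod_part I G x (idx ` A)) = 1"
  shows "\<exists>B \<subseteq> {m..}. \<forall>k\<ge>m. 1/2 \<le> cmod (\<theta> k (prod_part I G x (idx ` B)) - 1)"
proof (rule greedy_hump)
  fix k :: nat and A A' :: "nat set"
  assume "A \<inter> A' = {}"
  then have "idx ` A \<inter> idx ` A' = {}"
    using inj by (auto dest: injD)
  then show "\<theta> k (prod_part I G x (idx ` (A \<union> A'))) =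
               \<theta> k (prod_part I G x (idx ` A)) * \<theta> k (prod_part I G x (idx ` A'))"
    unfolding image_Un by (rule character_prod_part_union[OF mon \<theta> x])
next
  show "cmod (\<theta> k (prod_part I G x (idx ` A))) = 1" for k and A :: "nat set"
    by (rule character_unit[OF \<theta> prod_part_carrier[OF mon x]])
next
  show "1 \<le> cmod (\<theta> k (prod_part I G x (idx ` {k})) - 1)" for k
    using hump[of k] by simp
qed (rule tail)

lemma character_trivial_on_far_parts:
  fixes idx :: "nat \<Rightarrow> 'i"
  assumes cg: "\<forall>i\<in>I. convergence_group (G i) (conv i)"
    and \<phi>: "\<phi> \<in> characters (product_group I G) (product_conv I G conv)"
    and x: "x \<in> carrier (product_group I G)" and inj: "inj idx"
  shows "\<exists>m. \<forall>A \<subseteq> {m..}. \<phi> (prod_part I G x (idx ` A)) = 1"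
proof -
  have mon: "\<forall>i\<in>I. monoid (G i)"
    using cg convergence_group_group group.is_monoid by blast
  obtain J where J: "finite J" "\<forall>y\<in>prod_trivial_on I G J. \<phi> y = 1"
    using character_finite_support[OF cg \<phi>] by blast
  have "finite (idx -` J)"
    using J(1) inj by (simp add: finite_vimageI)
  then obtain m where m: "idx -` J \<subseteq> {..<m}"
    using finite_nat_bounded by blast
  have "\<phi> (prod_part I G x (idx ` A)) = 1" if "A \<subseteq> {m..}" for A
  proof -
    have "idx a \<notin> J" if "a \<in> A" for a
      using m \<open>A \<subseteq> {m..}\<close> that by fastforce
    then have "idx ` A \<inter> J = {}"
      by blast
    then have "prod_part I G x (idx ` A) \<in> prod_trivial_on I G J"
      by (rule prod_part_trivial_on[OF mon x])
    then show ?thesis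
      using J(2) by blast
  qed
  then show ?thesis by blast
qed

lemma avoiding_sequence:
  fixes J :: "'c \<Rightarrow> 'i set"
  assumes new: "\<forall>K. finite K \<longrightarrow> (\<exists>i \<phi>. i \<notin> K \<and> \<phi> \<in> M \<and> Q i \<phi>)"
    and fin: "\<forall>\<phi>\<in>M. finite (J \<phi>)"
  obtains idx :: "nat \<Rightarrow> 'i" and ph :: "nat \<Rightarrow> 'c"
    where "inj idx" and "\<And>n. ph n \<in> M \<and> Q (idx n) (ph n)"
      and "\<And>k l. k < l \<Longrightarrow> idx l \<notin> J (ph k)"
proof -
  text \<open>A state (K, i, phi) consists of the coordinates K used so far and a fresh
    coordinate i with its witness phi; the next state must use i and J(phi) too.\<close>
  define good :: "'i set \<times> 'i \<times> 'c \<Rightarrow> bool"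
    where "good = (\<lambda>(K, i, \<phi>). finite K \<and> i \<notin> K \<and> \<phi> \<in> M \<and> Q i \<phi>)"
  define used :: "'i set \<times> 'i \<times> 'c \<Rightarrow> 'i set"
    where "used = (\<lambda>(K, i, \<phi>). K \<union> {i} \<union> J \<phi>)"
  have "\<exists>s. good s"
    using new by (auto simp: good_def)
  moreover have "\<exists>s'. good s' \<and> used s \<subseteq> fst s'" if "good s" for s
  proof -
    have "finite (used s)"
      using that fin by (auto simp: good_def used_def split: prod.splits)
    then obtain i \<phi> where "i \<notin> used s" "\<phi> \<in> M" "Q i \<phi>"
      using new by blast
    then show ?thesis
      using \<open>finite (used s)\<close> by (intro exI[of _ "(used s, i, \<phi>)"]) (simp add: good_def)
  qed
  ultimately obtain f where f: "\<And>n. good (f n)" "\<And>n. used (f n) \<subseteq> fst (f (Suc n))"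
    using dependent_nat_choice[of "\<lambda>_. good" "\<lambda>_ s s'. used s \<subseteq> fst s'"] by blast
  define idx where "idx n = fst (snd (f n))" for n
  define ph where "ph n = snd (snd (f n))" for n
  have step: "{idx k} \<union> J (ph k) \<subseteq> fst (f (Suc k))" for k
    using f(2)[of k] by (auto simp: used_def idx_def ph_def split: prod.splits)
  have "fst (f n) \<subseteq> fst (f (Suc n))" for n
    using f(2)[of n] by (auto simp: used_def split: prod.splits)
  then have mono: "fst (f k) \<subseteq> fst (f l)" if "k \<le> l" for k l
    using that by (rule lift_Suc_mono_le)
  have later: "{idx k} \<union> J (ph k) \<subseteq> fst (f l)" if "k < l" for k l
    using step[of k] mono[of "Suc k" l] that by auto
  have fresh: "idx l \<notin> fst (f l)" for l
    using f(1)[of l] by (auto simp: good_def idx_def split: prod.splits)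
  have "idx k \<noteq> idx l" if "k < l" for k l
    using later[OF that] fresh[of l] by auto
  then have "inj idx"
    by (rule linorder_injI)
  moreover have "ph n \<in> M \<and> Q (idx n) (ph n)" for n
    using f(1)[of n] by (auto simp: good_def idx_def ph_def split: prod.splits)
  moreover have "idx l \<notin> J (ph k)" if "k < l" for k l
    using later[OF that] fresh[of l] by auto
  ultimately show ?thesis
    by (rule that)
qed

lemma far_witnesses:
  fixes I :: "'i set"
  assumes mon: "\<forall>i\<in>I. monoid (G i)"
    and M: "M \<subseteq> characters (product_group I G) cv"
    and unbounded: "\<not> (\<exists>I0. I0 \<subseteq> I \<and> finite I0 \<and>
           (\<forall>\<phi>\<in>M. \<forall>i\<in>I - I0. \<forall>g\<in>carrier (G i). \<phi> (prod_inj I G i g) = 1))"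
  shows "\<forall>K. finite K \<longrightarrow> (\<exists>i \<phi>. i \<notin> K \<and> \<phi> \<in> M \<and>
           i \<in> I \<and> (\<exists>g\<in>carrier (G i). 1 \<le> cmod (\<phi> (prod_inj I G i g) - 1)))"
proof (intro allI impI)
  fix K :: "'i set"
  assume "finite K"
  then have "I \<inter> K \<subseteq> I" and "finite (I \<inter> K)"
    by auto
  with unbounded obtain \<phi> i g where \<phi>: "\<phi> \<in> M" and i: "i \<in> I - K" and g: "g \<in> carrier (G i)"
    and ne: "\<phi> (prod_inj I G i g) \<noteq> 1"
    by blast
  from \<phi> M have "\<phi> \<in> characters (product_group I G) cv"
    by blast
  from character_far_on_factor[OF mon this _ g ne] i \<phi>
  show "\<exists>i \<phi>. i \<notin> K \<and> \<phi> \<in> M \<and>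
          i \<in> I \<and> (\<exists>g\<in>carrier (G i). 1 \<le> cmod (\<phi> (prod_inj I G i g) - 1))"
    by blast
qed

text \<open>The
  coordinates are chosen to avoid the finite supports of the earlier characters.\<close>

lemma hump_data:
  fixes I :: "'i set" and G :: "'i \<Rightarrow> ('a, 'b) monoid_scheme"
  assumes cg: "\<forall>i\<in>I. convergence_group (G i) (conv i)"
    and M: "M \<subseteq> characters (product_group I G) (product_conv I G conv)"
    and unbounded: "\<not> (\<exists>I0. I0 \<subseteq> I \<and> finite I0 \<and>
           (\<forall>\<phi>\<in>M. \<forall>i\<in>I - I0. \<forall>g\<in>carrier (G i). \<phi> (prod_inj I G i g) = 1))"
  obtains idx :: "nat \<Rightarrow> 'i" and \<theta> :: "nat \<Rightarrow> ('i \<Rightarrow> 'a) \<Rightarrow> complex" and x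
    where "inj idx" and "x \<in> carrier (product_group I G)" and "\<And>n. \<theta> n \<in> M"
      and "\<And>n. 1 \<le> cmod (\<theta> n (prod_part I G x {idx n}) - 1)"
      and "\<And>k A. A \<subseteq> {k<..} \<Longrightarrow> \<theta> k (prod_part I G x (idx ` A)) = 1"
proof -
  have mon: "\<forall>i\<in>I. monoid (G i)"
    using cg convergence_group_group group.is_monoid by blast
  have "\<forall>\<phi>\<in>M. \<exists>J. finite J \<and> (\<forall>y\<in>prod_trivial_on I G J. \<phi> y = 1)"
    using character_finite_support[OF cg] M by blast
  then obtain J where J: "\<forall>\<phi>\<in>M. finite (J \<phi>) \<and> (\<forall>y\<in>prod_trivial_on I G (J \<phi>). \<phi> y = 1)"
    by (rule bchoice[THEN exE])
  have finJ: "\<forall>\<phi>\<in>M. finite (J \<phi>)"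
    using J by blast
  obtain idx :: "nat \<Rightarrow> 'i" and \<theta> :: "nat \<Rightarrow> ('i \<Rightarrow> 'a) \<Rightarrow> complex"
    where inj: "inj idx"
    and seq: "\<And>n. \<theta> n \<in> M \<and> idx n \<in> I \<and>
                  (\<exists>g\<in>carrier (G (idx n)). 1 \<le> cmod (\<theta> n (prod_inj I G (idx n) g) - 1))"
    and avoid: "\<And>k l. k < l \<Longrightarrow> idx l \<notin> J (\<theta> k)"
    by (rule avoiding_sequence[OF far_witnesses[OF mon M unbounded] finJ]) (rule that)
  have "\<forall>n. \<exists>h. h \<in> carrier (G (idx n)) \<and> 1 \<le> cmod (\<theta> n (prod_inj I G (idx n) h) - 1)"
    using seq by blast
  then obtain g where g: "\<forall>n. g n \<in> carrier (G (idx n)) \<and> 1 \<le> cmod (\<theta> n (prod_inj I G (idx n) (g n)) - 1)"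
    by (rule choice[THEN exE])
  have "idx n \<in> I" and "g n \<in> carrier (G (idx n))" for n
    using seq g by blast+
  then obtain x where x: "x \<in> carrier (product_group I G)" and x_idx: "\<And>n. x (idx n) = g n"
    by (rule prod_glue[OF mon inj]) (rule that)
  have tail: "\<theta> k (prod_part I G x (idx ` A)) = 1" if A: "A \<subseteq> {k<..}" for k A
  proof -
    have "idx a \<notin> J (\<theta> k)" if "a \<in> A" for a
      using A that avoid by auto
    then have "prod_part I G x (idx ` A) \<in> prod_trivial_on I G (J (\<theta> k))"
      by (intro prod_part_trivial_on[OF mon x]) blast
    then show ?thesis
      using J seq by blast
  qed
  show ?thesis
  proof (rule that[OF inj x])
    show "\<theta> n \<in> M" for n
      using seq by blast
    show "1 \<le> cmod (\<theta> n (prod_part I G x {idx n}) - 1)" for n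
      using g by (simp add: prod_part_singleton x_idx)
  qed (rule tail)
qed

lemma gliding_hump_points:
  fixes I :: "'i set" and G :: "'i \<Rightarrow> ('a, 'b) monoid_scheme"
  assumes cg: "\<forall>i\<in>I. convergence_group (G i) (conv i)"
    and M: "M \<subseteq> characters (product_group I G) (product_conv I G conv)"
    and unbounded: "\<not> (\<exists>I0. I0 \<subseteq> I \<and> finite I0 \<and>
           (\<forall>\<phi>\<in>M. \<forall>i\<in>I - I0. \<forall>g\<in>carrier (G i). \<phi> (prod_inj I G i g) = 1))"
  obtains \<theta> :: "nat \<Rightarrow> ('i \<Rightarrow> 'a) \<Rightarrow> complex" and p :: "nat \<Rightarrow> 'i \<Rightarrow> 'a"
    where "range p \<subseteq> carrier (product_group I G)" and "\<And>n. \<theta> n \<in> M"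
      and "\<And>m k. m \<le> k \<Longrightarrow> 1/2 \<le> cmod (\<theta> k (p m) - 1)"
      and "\<And>\<psi>. \<psi> \<in> M \<Longrightarrow> \<exists>m. \<psi> (p m) = 1"
proof -
  have mon: "\<forall>i\<in>I. monoid (G i)"
    using cg convergence_group_group group.is_monoid by blast
  obtain idx :: "nat \<Rightarrow> 'i" and \<theta> :: "nat \<Rightarrow> ('i \<Rightarrow> 'a) \<Rightarrow> complex" and x
    where inj: "inj idx" and x: "x \<in> carrier (product_group I G)" and \<theta>: "\<And>n. \<theta> n \<in> M"
      and hump: "\<And>n. 1 \<le> cmod (\<theta> n (prod_part I G x {idx n}) - 1)"
      and tail: "\<And>k A. A \<subseteq> {k<..} \<Longrightarrow> \<theta> k (prod_part I G x (idx ` A)) = 1"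
    by (rule hump_data[OF cg M unbounded]) (rule that)
  have "\<theta> n \<in> characters (product_group I G) (product_conv I G conv)" for n
    using \<theta> M by blast
  from gliding_hump[OF mon this x inj hump tail]
  have "\<forall>m. \<exists>B \<subseteq> {m..}. \<forall>k\<ge>m. 1/2 \<le> cmod (\<theta> k (prod_part I G x (idx ` B)) - 1)"
    by blast
  then obtain B where B: "\<forall>m. B m \<subseteq> {m..} \<and>
      (\<forall>k\<ge>m. 1/2 \<le> cmod (\<theta> k (prod_part I G x (idx ` B m)) - 1))"
    by (rule choice[THEN exE])
  show thesis
  proof (rule that[of "\<lambda>m. prod_part I G x (idx ` B m)" \<theta>])
    show "range (\<lambda>m. prod_part I G x (idx ` B m)) \<subseteq> carrier (product_group I G)"
      using prod_part_carrier[OF mon x] by blast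
    show "1/2 \<le> cmod (\<theta> k (prod_part I G x (idx ` B m)) - 1)" if "m \<le> k" for m k
      using B that by blast
    show "\<exists>m. \<psi> (prod_part I G x (idx ` B m)) = 1" if \<psi>: "\<psi> \<in> M" for \<psi>
    proof -
      obtain m where "\<forall>A \<subseteq> {m..}. \<psi> (prod_part I G x (idx ` A)) = 1"
        using character_trivial_on_far_parts[OF cg _ x inj] \<psi> M by blast
      then show ?thesis
        using B by blast
    qed
  qed (rule \<theta>)
qed

subsection \<open>Compactness\<close>

lemma compactin_pointwise_uniform_index:
  fixes M :: "('x \<Rightarrow> complex) set" and p :: "nat \<Rightarrow> 'x"
  assumes M: "compactin (pointwise_top X) M" and p: "range p \<subseteq> X" and V: "open V"
    and hit: "\<forall>\<psi>\<in>M. \<exists>m. \<psi> (p m) \<in> V"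
  shows "\<exists>N. \<forall>\<psi>\<in>M. \<exists>m\<le>N. \<psi> (p m) \<in> V"
proof -
  define U where "U m = {\<psi> \<in> topspace (pointwise_top X). \<psi> (p m) \<in> V}" for m
  have "continuous_map (pointwise_top X) euclidean (\<lambda>\<psi>. \<psi> (p m))" for m
    using continuous_map_product_projection[where k = "p m" and I = X and X = "\<lambda>_. euclidean"] p
    unfolding pointwise_top_def by auto
  then have opens: "openin (pointwise_top X) (U m)" for m
    unfolding U_def using V open_openin openin_continuous_map_preimage by blast
  have cover: "M \<subseteq> \<Union>(range U)"
  proof
    fix \<psi> assume "\<psi> \<in> M"
    then obtain m where "\<psi> (p m) \<in> V"
      using hit by blast
    moreover have "\<psi> \<in> topspace (pointwise_top X)"
      using compactin_subset_topspace[OF M] \<open>\<psi> \<in> M\<close> by blast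
    ultimately show "\<psi> \<in> \<Union>(range U)"
      by (auto simp: U_def)
  qed
  have "\<exists>F. finite F \<and> F \<subseteq> range U \<and> M \<subseteq> \<Union>F"
    by (rule compactinD[OF M _ cover]) (use opens in blast)
  then obtain F where F: "finite F" "F \<subseteq> range U" "M \<subseteq> \<Union>F"
    by blast
  obtain Ns where Ns: "finite Ns" "F = U ` Ns"
    using finite_subset_image[OF F(1,2)] by blast
  obtain N where N: "Ns \<subseteq> {..<N}"
    using finite_nat_bounded[OF Ns(1)] by blast
  have "\<exists>m\<le>N. \<psi> (p m) \<in> V" if \<psi>: "\<psi> \<in> M" for \<psi>
  proof -
    obtain m where "m \<in> Ns" "\<psi> \<in> U m"
      using \<psi> F(3) Ns(2) by blast
    then show ?thesis
      using N by (auto simp: U_def intro!: exI[of _ m])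
  qed
  then show ?thesis
    by blast
qed

theorem lemma2p8:
  fixes I :: "'i set"
    and G :: "'i \<Rightarrow> ('a, 'b) monoid_scheme"
    and conv :: "'i \<Rightarrow> 'a filter \<Rightarrow> 'a \<Rightarrow> bool"
    and M :: "(('i \<Rightarrow> 'a) \<Rightarrow> complex) set"
  assumes "\<forall>i\<in>I. convergence_group (G i) (conv i)"
    and "M \<subseteq> characters (product_group I G) (product_conv I G conv)"
    and "compactin (pointwise_top (carrier (product_group I G))) M"
  shows "\<exists>I0. I0 \<subseteq> I \<and> finite I0 \<and>
           (\<forall>\<phi>\<in>M. \<forall>i\<in>I - I0. \<forall>g\<in>carrier (G i). \<phi> (prod_inj I G i g) = 1)"
proof (rule ccontr)
  assume neg: "\<not> ?thesis"
  obtain \<theta> :: "nat \<Rightarrow> ('i \<Rightarrow> 'a) \<Rightarrow> complex" and p :: "nat \<Rightarrow> 'i \<Rightarrow> 'a"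
    where p: "range p \<subseteq> carrier (product_group I G)" and \<theta>: "\<And>n. \<theta> n \<in> M"
    and far: "\<And>m k. m \<le> k \<Longrightarrow> 1/2 \<le> cmod (\<theta> k (p m) - 1)"
    and hit: "\<And>\<psi>. \<psi> \<in> M \<Longrightarrow> \<exists>m. \<psi> (p m) = 1"
    by (rule gliding_hump_points[OF assms(1,2) neg]) (rule that)
  have "(1::complex) \<in> ball 1 (1/2)"
    by simp
  then have "\<forall>\<psi>\<in>M. \<exists>m. \<psi> (p m) \<in> ball 1 (1/2)"
    using hit by metis
  then obtain N where "\<forall>\<psi>\<in>M. \<exists>m\<le>N. \<psi> (p m) \<in> ball 1 (1/2)"
    using compactin_pointwise_uniform_index[OF assms(3) p open_ball] by blast
  then obtain m where "m \<le> N" and "\<theta> N (p m) \<in> ball 1 (1/2)"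
    using \<theta> by blast
  then have "cmod (\<theta> N (p m) - 1) < 1/2"
    by (simp add: dist_norm norm_minus_commute)
  with far[OF \<open>m \<le> N\<close>] show False
    by simp
qed

end
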